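(* Fix $V_{\sf P}\ge0$. Then $$\lim_{\delta\to1}\lim_{p\to0}\frac{{\sf Eng}({\sf PEAR})}{{\sf Eng}({\sf APP})}=1,\qquad \lim_{\delta\to1}\lim_{p\to0}\frac{{\sf Util}({\sf PEAR})}{{\sf Util}({\sf APP})}=1+\frac{1}{\ln(1+2e^{V_{\sf P}})}.$$
   Context: Model. Time $t=0,1,2,\dots$, discount factor $\delta\in[0,1)$. Two item types, popular ${\sf P}$ and niche ${\sf N}$, infinitely many items each; at each time $t$ the platform recommends a set $\pi_t$ of two fresh items of chosen types. Utility of item $i$: $u_i=V_{\tau(i)}+\epsilon_i$; outside option: $u_\emptyset=\epsilon_\emptyset$; all noises i.i.d. Gumbel with scale $1$ and mean $0$. User chooses $c_t=\arg\max_{j\in\pi_t\cup\{\emptyset\}}u_j$. $V_{\sf P}$ is a known constant; $V_{\sf N}$ is drawn once, fixed over time, independent of noise, with $\mathbb P(V_{\sf N}=(1-p)/p)=p$, $\mathbb P(V_{\sf N}=-1)=1-p$, $p\in(0,1)$. ${\sf Eng}(\pi)=\sum_{t\ge0}\delta^t\mathbb P(c_t\ne\emptyset)$, ${\sf Util}(\pi)=\sum_{t\ge0}\delta^t\mathbb E[\max_{j\in\pi_t\cup\{\emptyset\}}u_j]$ (expectations also over $V_{\sf N}$). ${\sf APP}$ recommends two popular items at every time. Policy ${\sf PEAR}$: let $\rho_1=\frac{e^{(1-p)/p}}{1+e^{V_{\sf P}}+e^{(1-p)/p}}$, $\rho_2=\frac{e^{-1}}{1+e^{V_{\sf P}}+e^{-1}}$.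 Maintain counters $S,F$ (initially $0$) and $p_0=p$. At each time $t$: if $p_t\ge p$, recommend one popular and one niche item; if the niche item is chosen increment $S$, otherwise increment $F$. If $p_t<p$, recommend two popular items. Then set $p_{t+1}=\left(1+\frac{1-p}{p}\cdot\frac{\rho_2^S(1-\rho_2)^F}{\rho_1^S(1-\rho_1)^F}\right)^{-1}$. *)

theory Defs
  imports "HOL-Analysis.Analysis" "HOL-Probability.Probability"
begin

section \<open>Gumbel noise (scale 1, mean 0, i.e. location -euler_mascheroni)\<close>

definition gumbel_density :: "real \<Rightarrow> real" where
  "gumbel_density x =
     exp (-(x + euler_mascheroni)) * exp (- exp (-(x + euler_mascheroni)))"

definition gumbel :: "real measure" where
  "gumbel = density lborel (\<lambda>x. ennreal (gumbel_density x))"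

text \<open>A recommended set is given by the list vs of mean utilities of its items.
  Index 0 is the outside option (utility = its noise), index i+1 is item i
  (utility vs!i + noise).\<close>

definition noise :: "real list \<Rightarrow> (nat \<Rightarrow> real) measure" where
  "noise vs = PiM {..length vs} (\<lambda>_. gumbel)"

definition util :: "real list \<Rightarrow> (nat \<Rightarrow> real) \<Rightarrow> nat \<Rightarrow> real" where
  "util vs \<omega> i = (if i = 0 then 0 else vs ! (i - 1)) + \<omega> i"

definition choice_prob :: "real list \<Rightarrow> nat \<Rightarrow> real" where
  "choice_prob vs j = measure (noise vs)
     {\<omega> \<in> space (noise vs). \<forall>i\<in>{..length vs}. i \<noteq> j \<longrightarrow> util vs \<omega> i < util vs \<omega> j}"

definition eng_step :: "real list \<Rightarrow> real" where
  "eng_step vs = (\<Sum>j\<in>{1..length vs}. choice_prob vs j)"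

definition util_step :: "real list \<Rightarrow> real" where
  "util_step vs = integral\<^sup>L (noise vs) (\<lambda>\<omega>. Max (util vs \<omega> ` {..length vs}))"

definition rho1 :: "real \<Rightarrow> real \<Rightarrow> real" where
  "rho1 VP p = exp ((1 - p) / p) / (1 + exp VP + exp ((1 - p) / p))"

definition rho2 :: "real \<Rightarrow> real \<Rightarrow> real" where
  "rho2 VP p = exp (-1) / (1 + exp VP + exp (-1))"

definition post :: "real \<Rightarrow> real \<Rightarrow> nat \<Rightarrow> nat \<Rightarrow> real" where
  "post VP p S F = inverse (1 + (1 - p) / p *
      ((rho2 VP p ^ S * (1 - rho2 VP p) ^ F) / (rho1 VP p ^ S * (1 - rho1 VP p) ^ F)))"

text \<open>Offered set at a state (S,F,p_t): one popular + one niche item when exploring,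
  otherwise two popular items.  v is the realised value of V_N.\<close>
definition pear_offer :: "real \<Rightarrow> real \<Rightarrow> real \<Rightarrow> real \<Rightarrow> real list" where
  "pear_offer VP p v q = (if q \<ge> p then [VP, v] else [VP, VP])"

text \<open>One step of the state process (S, F, p_t), given V_N = v.  When exploring,
  the niche item (index 2) is chosen with its true choice probability.\<close>
definition pear_step :: "real \<Rightarrow> real \<Rightarrow> real \<Rightarrow> nat \<times> nat \<times> real \<Rightarrow> (nat \<times> nat \<times> real) pmf" where
  "pear_step VP p v st = (case st of (S, F, q) \<Rightarrow>
     if q \<ge> p then
       map_pmf (\<lambda>b. if b then (S + 1, F, post VP p (S + 1) F) else (S, F + 1, post VP p S (F + 1)))
         (bernoulli_pmf (choice_prob [VP, v] 2))
     else return_pmf (S, F, post VP p S F))"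

primrec pear_state :: "real \<Rightarrow> real \<Rightarrow> real \<Rightarrow> nat \<Rightarrow> (nat \<times> nat \<times> real) pmf" where
  "pear_state VP p v 0 = return_pmf (0, 0, p)"
| "pear_state VP p v (Suc t) = bind_pmf (pear_state VP p v t) (pear_step VP p v)"

definition eng_pear_given :: "real \<Rightarrow> real \<Rightarrow> real \<Rightarrow> real \<Rightarrow> real" where
  "eng_pear_given VP \<delta> p v = (\<Sum>t. \<delta> ^ t *
     measure_pmf.expectation (pear_state VP p v t)
       (\<lambda>(S, F, q). eng_step (pear_offer VP p v q)))"

definition util_pear_given :: "real \<Rightarrow> real \<Rightarrow> real \<Rightarrow> real \<Rightarrow> real" where
  "util_pear_given VP \<delta> p v = (\<Sum>t. \<delta> ^ t *
     measure_pmf.expectation (pear_state VP p v t)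
       (\<lambda>(S, F, q). util_step (pear_offer VP p v q)))"

definition Eng_PEAR :: "real \<Rightarrow> real \<Rightarrow> real \<Rightarrow> real" where
  "Eng_PEAR VP \<delta> p = p * eng_pear_given VP \<delta> p ((1 - p) / p) + (1 - p) * eng_pear_given VP \<delta> p (-1)"

definition Util_PEAR :: "real \<Rightarrow> real \<Rightarrow> real \<Rightarrow> real" where
  "Util_PEAR VP \<delta> p = p * util_pear_given VP \<delta> p ((1 - p) / p) + (1 - p) * util_pear_given VP \<delta> p (-1)"

definition Eng_APP :: "real \<Rightarrow> real \<Rightarrow> real" where
  "Eng_APP VP \<delta> = (\<Sum>t. \<delta> ^ t * eng_step [VP, VP])"

definition Util_APP :: "real \<Rightarrow> real \<Rightarrow> real" where
  "Util_APP VP \<delta> = (\<Sum>t. \<delta> ^ t * util_step [VP, VP])"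

end

theory Submission
  imports Defs "HOL-Real_Asymp.Real_Asymp"
begin

text \<open>With i.i.d. Gumbel noise, the best of the outside option and two items of mean utilities a
  and b is again Gumbel distributed, shifted by ln (1 + e^a + e^b); as the noise has mean zero,
  this is the expected utility of the menu. For small p a single failure drives PEAR's posterior
  below p, so PEAR explores at time t exactly if the niche item has been chosen at all earlier
  times, which has probability c^t, c being the probability that the niche item is chosen.
  If V_N = -1 then c < 1 is fixed and PEAR's discounted values are geometric series in \<delta>c and \<delta>.
  If V_N = (1 - p)/p then c \<rightarrow> 1 and the menu's utility is about 1/p, which after weighting with
  the prior p contributes 1/(1 - \<delta>), while engagement stays bounded and its weight p vanishes.
  Dividing by APP's value e/(1 - \<delta>) and letting \<delta> \<rightarrow> 1 leaves 1 and 1 + 1/e with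
  e = ln (1 + 2 e^VP) for utility.\<close>

section \<open>The Gumbel distribution\<close>

definition gumbel_cdf :: "real \<Rightarrow> real" where
  "gumbel_cdf x = exp (- exp (-(x + euler_mascheroni)))"

lemma gumbel_density_nonneg: "0 \<le> gumbel_density x"
  by (simp add: gumbel_density_def)

lemma gumbel_density_borel [measurable]: "gumbel_density \<in> borel_measurable borel"
  unfolding gumbel_density_def by measurable

lemma gumbel_cdf_has_real_derivative: "(gumbel_cdf has_real_derivative gumbel_density x) (at x)"
  unfolding gumbel_cdf_def gumbel_density_def
  by (auto intro!: derivative_eq_intros simp: mult.commute)

lemma gumbel_cdf_at_top: "(gumbel_cdf \<longlongrightarrow> 1) at_top"
  unfolding gumbel_cdf_def[abs_def] by real_asymp

lemma gumbel_cdf_at_bot: "(gumbel_cdf \<longlongrightarrow> 0) at_bot"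
  unfolding gumbel_cdf_def[abs_def] by real_asymp

lemma gumbel_cdf_pos: "0 < gumbel_cdf x"
  and gumbel_cdf_less_1: "gumbel_cdf x < 1"
  by (auto simp: gumbel_cdf_def)

lemma space_gumbel [simp]: "space gumbel = UNIV"
  and sets_gumbel [simp]: "sets gumbel = sets borel"
  by (auto simp: gumbel_def)

lemma emeasure_gumbel_atLeast: "emeasure gumbel {a..} = ennreal (1 - gumbel_cdf a)"
proof -
  have "emeasure gumbel {a..} = (\<integral>\<^sup>+x. ennreal (gumbel_density x) * indicator {a..} x \<partial>lborel)"
    unfolding gumbel_def by (subst emeasure_density) auto
  also have "\<dots> = ennreal (1 - gumbel_cdf a)"
    by (rule nn_integral_FTC_atLeast[OF _ gumbel_cdf_has_real_derivative gumbel_density_nonneg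
          gumbel_cdf_at_top]) auto
  finally show ?thesis .
qed

lemma emeasure_gumbel_singleton: "emeasure gumbel {a} = 0"
  unfolding gumbel_def
  by (subst emeasure_density)
    (auto intro!: nn_integral_zero' AE_I'[of "{a}"] split: split_indicator)

lemma emeasure_gumbel_UNIV: "emeasure gumbel UNIV = 1"
proof -
  have "(\<lambda>n. emeasure gumbel {- real n..}) \<longlonglongrightarrow> emeasure gumbel (\<Union>n. {- real n..})"
    by (rule Lim_emeasure_incseq) (auto simp: incseq_def)
  moreover have "(\<Union>n. {- real n..}) = UNIV"
    by (auto simp: minus_le_iff intro: real_arch_simple)
  ultimately have "(\<lambda>n. ennreal (1 - gumbel_cdf (- real n))) \<longlonglongrightarrow> emeasure gumbel UNIV"
    by (simp add: emeasure_gumbel_atLeast)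
  moreover have "(\<lambda>n. gumbel_cdf (- real n)) \<longlonglongrightarrow> 0"
    by (rule filterlim_compose[OF gumbel_cdf_at_bot])
       (simp add: filterlim_uminus_at_bot filterlim_real_sequentially)
  then have "(\<lambda>n. ennreal (1 - gumbel_cdf (- real n))) \<longlonglongrightarrow> ennreal (1 - 0)"
    by (intro tendsto_intros)
  ultimately show ?thesis
    using LIMSEQ_unique by fastforce
qed

interpretation gumbel: prob_space gumbel
  by (rule prob_spaceI) (simp add: emeasure_gumbel_UNIV)

lemma measure_gumbel_atLeast: "measure gumbel {a..} = 1 - gumbel_cdf a"
  using emeasure_gumbel_atLeast[of a] gumbel_cdf_less_1[of a]
  by (simp add: gumbel.emeasure_eq_measure)

lemma measure_gumbel_greaterThan: "measure gumbel {a<..} = 1 - gumbel_cdf a"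
proof -
  have "measure gumbel {a..} = measure gumbel {a<..} + measure gumbel {a}"
    by (subst gumbel.finite_measure_Union[symmetric])
      (auto intro!: arg_cong[where f = "measure gumbel"])
  then show ?thesis
    using emeasure_gumbel_singleton[of a]
    by (simp add: measure_gumbel_atLeast gumbel.emeasure_eq_measure)
qed

lemma measure_gumbel_atMost: "measure gumbel {..a} = gumbel_cdf a"
proof -
  have "{..a} = UNIV - {a<..}" by auto
  then show ?thesis
    by (simp add: gumbel.prob_compl[of "{a<..}", simplified] measure_gumbel_greaterThan)
qed

lemma measure_gumbel_lessThan: "measure gumbel {..<a} = gumbel_cdf a"
proof -
  have "{..<a} = UNIV - {a..}" by auto
  then show ?thesis
    by (simp add: gumbel.prob_compl[of "{a..}", simplified] measure_gumbel_atLeast)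
qed

section \<open>The Gumbel distribution has mean zero\<close>

lemma Gamma_has_integral_greaterThan:
  fixes x :: real
  assumes "0 < x"
  shows "((\<lambda>t. t powr (x - 1) * exp (-t)) has_integral Gamma x) {0<..}"
proof -
  have "((\<lambda>t. t powr (x - 1) / exp t) has_integral Gamma x) {0..}"
    using Gamma_integral_real[OF assms] .
  then have "((\<lambda>t. if t \<in> {0<..} then t powr (x - 1) / exp t else 0) has_integral Gamma x) {0..}"
    by (rule has_integral_spike[of "{0}", rotated 2]) auto
  then show ?thesis
    by (subst (asm) has_integral_restrict) (auto simp: exp_minus divide_inverse)
qed

lemma exp_neg_has_integral_greaterThan: "((\<lambda>t. exp (-t)) has_integral 1) {(0::real)<..}"
proof -
  have "((\<lambda>t. t powr (1 - 1) * exp (-t)) has_integral Gamma 1) {(0::real)<..}"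
    by (rule Gamma_has_integral_greaterThan) simp
  then have "((\<lambda>t. exp (-t)) has_integral Gamma 1) {(0::real)<..}"
    by (rule has_integral_eq[rotated]) simp
  then show ?thesis
    by simp
qed

lemma exp_neg_absolutely_integrable: "(\<lambda>t. exp (-t)) absolutely_integrable_on {(0::real)<..}"
  using exp_neg_has_integral_greaterThan by (intro nonnegative_absolutely_integrable_1) auto

text \<open>A common integrable majorant of \<bar>ln t\<bar> e^(-t) and of the difference quotients
  (t^h - 1) / h e^(-t) for 0 < h \<le> 1.\<close>

definition ln_exp_majorant :: "real \<Rightarrow> real" where
  "ln_exp_majorant t = (2 * t powr (-1/2) + t powr 2) * exp (-t)"

lemma ln_exp_majorant_has_integral:
  "(ln_exp_majorant has_integral (2 * Gamma (1/2) + Gamma 3)) {0<..}"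
proof -
  have "((\<lambda>t. 2 * (t powr (1/2 - 1) * exp (-t)) + t powr (3 - 1) * exp (-t)) has_integral
        (2 * Gamma (1/2) + Gamma 3)) {(0::real)<..}"
    by (intro has_integral_add has_integral_mult_right Gamma_has_integral_greaterThan) simp_all
  then show ?thesis
    unfolding ln_exp_majorant_def[abs_def] by (simp add: algebra_simps)
qed

lemma neg_ln_le_powr:
  fixes t :: real
  assumes "0 < t"
  shows "- ln t \<le> 2 * t powr (-1/2)"
proof -
  have "- ln t = 2 * ln (t powr (-1/2))"
    using assms by (simp add: ln_powr)
  also have "\<dots> \<le> 2 * t powr (-1/2)"
    using ln_le_minus_one[of "t powr (-1/2)"] assms by simp
  finally show ?thesis .
qed

lemma abs_ln_le_majorant:
  fixes t :: real
  assumes "0 < t"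
  shows "\<bar>ln t\<bar> \<le> 2 * t powr (-1/2) + t powr 2"
proof (cases "1 \<le> t")
  case True
  then have "\<bar>ln t\<bar> \<le> t * t"
    using ln_le_minus_one[of t] by (simp add: order.trans[OF _ mult_left_mono[of 1 t t]])
  then have "\<bar>ln t\<bar> \<le> t powr 2"
    using assms by (simp add: power2_eq_square)
  then show ?thesis
    by (intro add_increasing) auto
next
  case False
  then show ?thesis
    using neg_ln_le_powr[OF assms] assms by (intro add_increasing2) auto
qed

lemma powr_difference_quotient_le:
  fixes t h :: real
  assumes t: "0 < t" and h: "0 < h" "h \<le> 1"
  shows "\<bar>(t powr h - 1) / h\<bar> \<le> 2 * t powr (-1/2) + t powr 2"
proof (cases "1 \<le> t")
  case True
  txt \<open>Convexity of exp: e^a - 1 \<le> a e^a with a = h ln t \<ge> 0.\<close>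
  have "exp (h * ln t) - 1 \<le> h * ln t * exp (h * ln t)"
    using exp_ge_add_one_self[of "- (h * ln t)"] by (simp add: exp_minus field_simps)
  then have "\<bar>(t powr h - 1) / h\<bar> \<le> ln t * t powr h"
    using True t h by (simp add: powr_def divide_simps mult_ac)
  also have "\<dots> \<le> t * t"
    using True t h ln_le_minus_one[of t] powr_mono[of h 1 t]
    by (intro mult_mono) auto
  finally have "\<bar>(t powr h - 1) / h\<bar> \<le> t powr 2"
    using t by (simp add: power2_eq_square)
  then show ?thesis
    by (intro add_increasing) auto
next
  case False
  have "1 - exp (h * ln t) \<le> - (h * ln t)"
    using exp_ge_add_one_self[of "h * ln t"] by linarith
  then have "\<bar>(t powr h - 1) / h\<bar> \<le> - ln t"
    using False t h by (simp add: powr_def divide_simps mult_ac mult_nonneg_nonpos)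
  then show ?thesis
    using neg_ln_le_powr[OF t] by (intro add_increasing2) auto
qed

lemma powr_difference_quotient_tendsto:
  fixes t :: real
  assumes "0 < t"
  shows "((\<lambda>h. (t powr h - 1) / h) \<longlongrightarrow> ln t) (at 0)"
proof -
  have "((\<lambda>h. exp (h * ln t)) has_real_derivative exp (0 * ln t) * (1 * ln t)) (at 0)"
    by (intro derivative_eq_intros) auto
  then show ?thesis
    using assms by (simp add: DERIV_def powr_def)
qed

lemma Gamma_difference_quotient_tendsto:
  "((\<lambda>h. (Gamma (1 + h) - 1) / h) \<longlongrightarrow> - euler_mascheroni) (at (0::real))"
proof -
  have "(Gamma has_field_derivative Gamma 1 * Digamma 1) (at (1::real))"
    by (rule has_field_derivative_Gamma) simp
  then show ?thesis
    by (simp add: DERIV_def)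
qed

text \<open>The integral of ln t e^(-t) is \<Gamma>'(1), by dominated convergence of the difference quotients
  (\<Gamma>(1 + h) - \<Gamma>(1)) / h, which are the integrals of (t^h - 1) / h e^(-t).\<close>

lemma ln_times_exp_neg_has_integral:
  "((\<lambda>t. ln t * exp (-t)) has_integral - euler_mascheroni) {(0::real)<..}"
  and ln_times_exp_neg_absolutely_integrable:
  "(\<lambda>t. ln t * exp (-t)) absolutely_integrable_on {(0::real)<..}"
proof -
  define h :: "nat \<Rightarrow> real" where "h k = inverse (real (Suc k))" for k
  define f where "f k t = (t powr h k - 1) / h k * exp (-t)" for k t
  have h: "0 < h k" "h k \<le> 1" for k
    by (simp_all add: h_def field_simps)
  have h_tendsto: "filterlim h (at 0) sequentially"
    unfolding h_def[abs_def] by (rule filterlim_atI[OF LIMSEQ_inverse_real_of_nat]) simp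
  have f_has_integral: "(f k has_integral (Gamma (1 + h k) - 1) / h k) {0<..}" for k
  proof -
    have "((\<lambda>t. (t powr (1 + h k - 1) * exp (-t) - exp (-t)) / h k) has_integral
          (Gamma (1 + h k) - 1) / h k) {0<..}"
      using h[of k] by (intro has_integral_divide has_integral_diff Gamma_has_integral_greaterThan
          exp_neg_has_integral_greaterThan) simp
    then show ?thesis
      by (rule has_integral_eq[rotated]) (simp add: f_def field_simps)
  qed
  have majorant: "ln_exp_majorant integrable_on {0<..}"
    using ln_exp_majorant_has_integral by blast
  have f_le: "norm (f k t) \<le> ln_exp_majorant t" if "t \<in> {0<..}" for k t
  proof -
    have "norm (f k t) = \<bar>(t powr h k - 1) / h k\<bar> * exp (-t)"
      by (simp add: f_def abs_mult)
    also have "\<dots> \<le> ln_exp_majorant t"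
      unfolding ln_exp_majorant_def using that h[of k]
      by (intro mult_right_mono powr_difference_quotient_le) auto
    finally show ?thesis .
  qed
  have f_tendsto: "(\<lambda>k. f k t) \<longlonglongrightarrow> ln t * exp (-t)" if "t \<in> {0<..}" for t
    unfolding f_def using that
    by (intro tendsto_intros filterlim_compose[OF powr_difference_quotient_tendsto h_tendsto]) simp
  have "(\<lambda>k. (Gamma (1 + h k) - 1) / h k) \<longlonglongrightarrow> - euler_mascheroni"
    by (rule filterlim_compose[OF Gamma_difference_quotient_tendsto h_tendsto])
  then show integral: "((\<lambda>t. ln t * exp (-t)) has_integral - euler_mascheroni) {(0::real)<..}"
    using f_le f_tendsto
    by (intro has_integral_dominated_convergence[OF f_has_integral majorant]) auto
  show "(\<lambda>t. ln t * exp (-t)) absolutely_integrable_on {(0::real)<..}"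
    using integral majorant abs_ln_le_majorant
    by (intro absolutely_integrable_integrable_bound[where g = ln_exp_majorant])
       (auto simp: ln_exp_majorant_def abs_mult mult_right_mono)
qed

text \<open>The substitution x = -(ln t + \<gamma>) turns gumbel_density x dx into e^(-t) dt, so the mean is
  minus the integral of (ln t + \<gamma>) e^(-t) over t > 0.\<close>

lemma gumbel_density_times_ident:
  "(\<lambda>x. gumbel_density x * x) absolutely_integrable_on UNIV \<and>
   integral UNIV (\<lambda>x. gumbel_density x * x) = 0"
proof -
  define g where "g t = -(ln t + euler_mascheroni)" for t :: real
  define S :: "real set" where "S = {0<..}"
  have g_deriv: "(g has_field_derivative (- inverse t)) (at t within S)" if "t \<in> S" for t
    using that unfolding g_def S_def by (auto intro!: derivative_eq_intros simp: divide_inverse)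
  have "inj_on g S"
    unfolding inj_on_def g_def S_def by auto
  have "g (exp (-(x + euler_mascheroni))) = x" for x
    by (simp add: g_def)
  then have g_S: "g ` S = UNIV"
    unfolding S_def by (metis UNIV_I exp_gt_zero greaterThan_iff image_eqI subsetI subset_antisym)
  define \<phi> where "\<phi> t = (-1) * (ln t * exp (-t)) - euler_mascheroni * exp (-t)" for t :: real
  have \<phi>_eq: "\<bar>- inverse t\<bar> * (gumbel_density (g t) * g t) = \<phi> t" if "t \<in> S" for t
    using that by (simp add: S_def \<phi>_def gumbel_density_def g_def field_simps)
  have \<phi>_integrable: "\<phi> absolutely_integrable_on S"
    unfolding \<phi>_def[abs_def] S_def
    by (intro set_integral_diff(1) set_integrable_mult_right
        ln_times_exp_neg_absolutely_integrable exp_neg_absolutely_integrable)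
  have \<phi>_integral: "(\<phi> has_integral 0) S"
    using has_integral_diff[OF has_integral_mult_right[OF ln_times_exp_neg_has_integral, of "-1"]
        has_integral_mult_right[OF exp_neg_has_integral_greaterThan, of euler_mascheroni]]
    by (simp add: \<phi>_def[abs_def] S_def)
  have "(\<lambda>t. \<bar>- inverse t\<bar> * (gumbel_density (g t) * g t)) absolutely_integrable_on S \<and>
        integral S (\<lambda>t. \<bar>- inverse t\<bar> * (gumbel_density (g t) * g t)) = 0"
  proof (intro conjI)
    show "(\<lambda>t. \<bar>- inverse t\<bar> * (gumbel_density (g t) * g t)) absolutely_integrable_on S"
      using \<phi>_integrable by (subst set_integrable_cong[OF refl refl \<phi>_eq]) auto
    show "integral S (\<lambda>t. \<bar>- inverse t\<bar> * (gumbel_density (g t) * g t)) = 0"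
      using \<phi>_integral by (subst integral_cong[OF \<phi>_eq]) (auto intro: integral_unique)
  qed
  then have "(\<lambda>x. gumbel_density x * x) absolutely_integrable_on g ` S \<and>
      integral (g ` S) (\<lambda>x. gumbel_density x * x) = 0"
    by (subst (asm) has_absolute_integral_change_of_variables_1'[OF _ g_deriv \<open>inj_on g S\<close>])
       (simp_all add: S_def)
  then show ?thesis
    by (simp add: g_S)
qed

lemma integrable_gumbel_ident: "integrable gumbel (\<lambda>x. x)"
  and integral_gumbel_ident: "(\<integral>x. x \<partial>gumbel) = 0"
proof -
  have "integrable lebesgue (\<lambda>x. gumbel_density x * x)"
    using gumbel_density_times_ident by (simp add: set_integrable_def)
  then have int: "integrable lborel (\<lambda>x. gumbel_density x * x)"
    by (subst (asm) integrable_completion) auto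
  then show "integrable gumbel (\<lambda>x. x)"
    unfolding gumbel_def by (subst integrable_density) (auto simp: gumbel_density_nonneg)
  show "(\<integral>x. x \<partial>gumbel) = 0"
    using integral_lborel[OF int] gumbel_density_times_ident
    unfolding gumbel_def by (subst integral_density) (auto simp: gumbel_density_nonneg)
qed

section \<open>Menus of two items\<close>

abbreviation gumbel3 :: "(nat \<Rightarrow> real) measure" where
  "gumbel3 \<equiv> PiM {..2} (\<lambda>_. gumbel)"

interpretation gumbel3: prob_space gumbel3
  by (rule prob_space_PiM) (simp add: gumbel.prob_space_axioms)

lemma atMost_2: "{..2::nat} = {0, 1, 2}"
  by auto

lemma ball_atMost_2: "(\<forall>i\<in>{..2::nat}. P i) \<longleftrightarrow> P 0 \<and> P 1 \<and> P 2"
  by (auto simp: atMost_2)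

lemma noise_pair: "noise [a, b] = gumbel3"
  by (simp add: noise_def numeral_2_eq_2)

lemma borel_measurable_gumbel: "borel_measurable gumbel = borel_measurable borel"
  by (intro measurable_cong_sets) auto

lemma gumbel3_component_measurable [measurable]:
  "i \<le> 2 \<Longrightarrow> (\<lambda>\<omega>. \<omega> i) \<in> borel_measurable gumbel3"
proof -
  assume "i \<le> 2"
  then have "(\<lambda>\<omega>. \<omega> i) \<in> measurable gumbel3 gumbel"
    by (intro measurable_component_singleton) auto
  then show ?thesis
    by (subst (asm) measurable_cong_sets[OF refl sets_gumbel])
qed

lemma box_in_sets_gumbel3:
  assumes "\<And>i. X i \<in> sets borel"
  shows "{\<omega> \<in> space gumbel3. \<forall>i\<in>{..2}. \<omega> i \<in> X i} \<in> sets gumbel3"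
proof -
  have "{\<omega> \<in> space gumbel3. \<forall>i\<in>{..2}. \<omega> i \<in> X i} =
    ((\<lambda>\<omega>. \<omega> 0) -` X 0 \<inter> space gumbel3) \<inter> ((\<lambda>\<omega>. \<omega> 1) -` X 1 \<inter> space gumbel3) \<inter>
    ((\<lambda>\<omega>. \<omega> 2) -` X 2 \<inter> space gumbel3)"
    by (auto simp: atMost_2)
  also have "\<dots> \<in> sets gumbel3"
    using assms by (intro sets.Int measurable_sets[OF gumbel3_component_measurable]) auto
  finally show ?thesis .
qed

lemma measure_gumbel3_box:
  assumes "\<And>i. X i \<in> sets borel"
  shows "measure gumbel3 {\<omega> \<in> space gumbel3. \<forall>i\<in>{..2}. \<omega> i \<in> X i} =
         measure gumbel (X 0) * measure gumbel (X 1) * measure gumbel (X 2)"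
proof -
  have "emeasure gumbel3 {\<omega> \<in> space gumbel3. \<forall>i\<in>{..2}. \<omega> i \<in> X i} =
      (\<Prod>i\<in>{..2}. emeasure gumbel (X i))"
    using product_prob_space.emeasure_PiM_Collect[of "\<lambda>_. gumbel" "{..2}" "{..2}" X] assms
    by (simp add: product_prob_spaceI gumbel.prob_space_axioms)
  also have "\<dots> = ennreal (\<Prod>i\<in>{..2}. measure gumbel (X i))"
    by (simp add: gumbel.emeasure_eq_measure prod_ennreal)
  finally have "measure gumbel3 {\<omega> \<in> space gumbel3. \<forall>i\<in>{..2}. \<omega> i \<in> X i} =
      (\<Prod>i\<in>{..2}. measure gumbel (X i))"
    by (simp add: gumbel3.emeasure_eq_measure prod_nonneg)
  then show ?thesis
    by (simp add: atMost_2)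
qed

text \<open>Max-stability: the maximum of independent Gumbel variables shifted by 0, a and b is a Gumbel
  variable shifted by ln (1 + e^a + e^b).\<close>

lemma gumbel_cdf_mult:
  "gumbel_cdf x * gumbel_cdf (x - a) * gumbel_cdf (x - b) = gumbel_cdf (x - ln (1 + exp a + exp b))"
  by (simp add: gumbel_cdf_def exp_diff exp_add[symmetric] exp_minus field_simps add_pos_pos)

lemma cdf_max_utility:
  "cdf (distr gumbel3 borel (\<lambda>\<omega>. max (\<omega> 0) (max (a + \<omega> 1) (b + \<omega> 2)))) x =
   gumbel_cdf (x - ln (1 + exp a + exp b))"
proof -
  define Y where "Y i = (if i = 0 then {..x} else if i = 1 then {..x - a} else {..x - b})" for i :: nat
  have "cdf (distr gumbel3 borel (\<lambda>\<omega>. max (\<omega> 0) (max (a + \<omega> 1) (b + \<omega> 2)))) x =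
        measure gumbel3 ((\<lambda>\<omega>. max (\<omega> 0) (max (a + \<omega> 1) (b + \<omega> 2))) -` {..x} \<inter> space gumbel3)"
    unfolding cdf_def by (subst measure_distr) auto
  also have "(\<lambda>\<omega>. max (\<omega> 0) (max (a + \<omega> 1) (b + \<omega> 2))) -` {..x} \<inter> space gumbel3 =
      {\<omega> \<in> space gumbel3. \<forall>i\<in>{..2}. \<omega> i \<in> Y i}"
    by (auto simp: Y_def atMost_2)
  also have "measure gumbel3 \<dots> = gumbel_cdf x * gumbel_cdf (x - a) * gumbel_cdf (x - b)"
    by (subst measure_gumbel3_box) (auto simp: Y_def measure_gumbel_atMost)
  finally show ?thesis
    by (simp add: gumbel_cdf_mult)
qed

lemma cdf_gumbel_shift: "cdf (distr gumbel borel (\<lambda>y. y + c)) x = gumbel_cdf (x - c)"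
proof -
  have "(\<lambda>y. y + c) -` {..x} \<inter> space gumbel = {..x - c}"
    by auto
  then show ?thesis
    unfolding cdf_def
    by (subst measure_distr) (auto simp: borel_measurable_gumbel measure_gumbel_atMost)
qed

lemma distr_max_utility:
  "distr gumbel3 borel (\<lambda>\<omega>. max (\<omega> 0) (max (a + \<omega> 1) (b + \<omega> 2))) =
   distr gumbel borel (\<lambda>y. y + ln (1 + exp a + exp b))"
proof (rule cdf_unique)
  show "cdf (distr gumbel3 borel (\<lambda>\<omega>. max (\<omega> 0) (max (a + \<omega> 1) (b + \<omega> 2)))) =
      cdf (distr gumbel borel (\<lambda>y. y + ln (1 + exp a + exp b)))"
    by (rule ext) (simp only: cdf_max_utility cdf_gumbel_shift)
qed (auto simp: borel_measurable_gumbel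
    intro!: gumbel3.real_distribution_distr gumbel.real_distribution_distr)

lemma Max_util_pair: "Max (util [a, b] \<omega> ` {..2}) = max (\<omega> 0) (max (a + \<omega> 1) (b + \<omega> 2))"
  by (simp add: atMost_2 util_def)

lemma util_step_pair: "util_step [a, b] = ln (1 + exp a + exp b)"
proof -
  let ?c = "ln (1 + exp a + exp b)"
  have "util_step [a, b] = (\<integral>\<omega>. Max (util [a, b] \<omega> ` {..2}) \<partial>gumbel3)"
    unfolding util_step_def noise_def by (simp add: numeral_2_eq_2)
  also have "\<dots> = (\<integral>\<omega>. max (\<omega> 0) (max (a + \<omega> 1) (b + \<omega> 2)) \<partial>gumbel3)"
    by (simp only: Max_util_pair)
  also have "\<dots> = (\<integral>x. x \<partial>distr gumbel3 borel (\<lambda>\<omega>. max (\<omega> 0) (max (a + \<omega> 1) (b + \<omega> 2))))"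
    by (subst integral_distr) auto
  also have "\<dots> = (\<integral>x. x \<partial>distr gumbel borel (\<lambda>y. y + ?c))"
    by (simp only: distr_max_utility)
  also have "\<dots> = (\<integral>y. y + ?c \<partial>gumbel)"
    by (subst integral_distr) (auto simp: borel_measurable_gumbel)
  also have "\<dots> = ?c"
    by (simp add: integrable_gumbel_ident integral_gumbel_ident gumbel.prob_space[unfolded space_gumbel])
  finally show ?thesis .
qed

lemma choice_prob_nonneg: "0 \<le> choice_prob vs j"
  by (simp add: choice_prob_def)

lemma choice_prob_le_1: "choice_prob vs j \<le> 1"
  unfolding choice_prob_def noise_def
  by (rule prob_space.prob_le_1) (simp add: prob_space_PiM gumbel.prob_space_axioms)

lemma eng_step_pair: "eng_step [a, b] = choice_prob [a, b] 1 + choice_prob [a, b] 2"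
proof -
  have "length [a, b] = 2" "{1..2::nat} = {1, 2}"
    by auto
  then show ?thesis
    unfolding eng_step_def by (simp only:) simp
qed

lemma choice_prob_pair: "choice_prob [a, b] j =
  measure gumbel3 {\<omega> \<in> space gumbel3. \<forall>i\<in>{..2}. i \<noteq> j \<longrightarrow> util [a, b] \<omega> i < util [a, b] \<omega> j}"
proof -
  have "length [a, b] = 2"
    by simp
  then show ?thesis
    unfolding choice_prob_def noise_pair by (simp only:)
qed

lemma choice_event_in_sets:
  assumes "j \<le> 2"
  shows "{\<omega> \<in> space gumbel3. \<forall>i\<in>{..2}. i \<noteq> j \<longrightarrow> util [a, b] \<omega> i < util [a, b] \<omega> j} \<in> sets gumbel3"
proof -
  have "(\<lambda>\<omega>. util [a, b] \<omega> i) \<in> borel_measurable gumbel3" if "i \<le> 2" for i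
    using that unfolding util_def by measurable
  then show ?thesis
    using assms unfolding ball_atMost_2 by measurable
qed

lemma choice_prob_pair_ge_box:
  assumes X: "\<And>i. X i \<in> sets borel" and j: "j \<le> 2"
    and wins: "\<And>\<omega>. \<forall>i\<in>{..2}. \<omega> i \<in> X i \<Longrightarrow> \<forall>i\<in>{..2}. i \<noteq> j \<longrightarrow> util [a, b] \<omega> i < util [a, b] \<omega> j"
  shows "measure gumbel (X 0) * measure gumbel (X 1) * measure gumbel (X 2) \<le> choice_prob [a, b] j"
proof -
  have "measure gumbel (X 0) * measure gumbel (X 1) * measure gumbel (X 2) =
        measure gumbel3 {\<omega> \<in> space gumbel3. \<forall>i\<in>{..2}. \<omega> i \<in> X i}"
    using measure_gumbel3_box[OF X] by simp
  also have "\<dots> \<le> choice_prob [a, b] j"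
    unfolding choice_prob_pair
  proof (rule gumbel3.finite_measure_mono[OF _ choice_event_in_sets[OF j]])
    show "{\<omega> \<in> space gumbel3. \<forall>i\<in>{..2}. \<omega> i \<in> X i} \<subseteq>
        {\<omega> \<in> space gumbel3. \<forall>i\<in>{..2}. i \<noteq> j \<longrightarrow> util [a, b] \<omega> i < util [a, b] \<omega> j}"
      using wins by auto
  qed
  finally show ?thesis .
qed

lemma eng_step_pair_pos: "0 < eng_step [a, a]"
proof -
  have "gumbel_cdf a * (1 - gumbel_cdf 0) * gumbel_cdf 0 \<le> choice_prob [a, a] 1"
    using choice_prob_pair_ge_box[of "\<lambda>i. if i = 0 then {..<a} else if i = 1 then {0<..} else {..<0}" 1 a a]
    by (auto simp: atMost_2 util_def measure_gumbel_lessThan measure_gumbel_greaterThan)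
  moreover have "0 < gumbel_cdf a * (1 - gumbel_cdf 0) * gumbel_cdf 0"
    by (simp add: gumbel_cdf_pos gumbel_cdf_less_1)
  ultimately show ?thesis
    using choice_prob_nonneg[of "[a, a]" 2] by (simp add: eng_step_pair)
qed

lemma eng_step_pair_bounds: "0 \<le> eng_step [a, b]" "eng_step [a, b] \<le> 2"
  using choice_prob_nonneg[of "[a, b]" 1] choice_prob_nonneg[of "[a, b]" 2]
    choice_prob_le_1[of "[a, b]" 1] choice_prob_le_1[of "[a, b]" 2]
  by (simp_all add: eng_step_pair)

lemma choice_prob_pair_second_less_1: "choice_prob [a, b] 2 < 1"
proof -
  define B where "B = {\<omega> \<in> space gumbel3.
    \<forall>i\<in>{..2}. \<omega> i \<in> (if i = 0 then {0<..} else if i = 1 then UNIV else {..<-b})}"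
  have B: "B \<in> sets gumbel3"
    unfolding B_def by (rule box_in_sets_gumbel3) auto
  have "choice_prob [a, b] 2 \<le> measure gumbel3 (space gumbel3 - B)"
    unfolding choice_prob_pair
    by (intro gumbel3.finite_measure_mono sets.compl_sets[OF B])
      (auto simp: B_def atMost_2 util_def)
  also have "\<dots> = 1 - (1 - gumbel_cdf 0) * gumbel_cdf (- b)"
    using measure_gumbel3_box[of "\<lambda>i. if i = 0 then {0<..} else if i = 1 then UNIV else {..<-b}"]
    by (simp add: gumbel3.prob_compl[OF B] B_def[symmetric] measure_gumbel_lessThan
        measure_gumbel_greaterThan gumbel.prob_space[unfolded space_gumbel])
  also have "\<dots> < 1"
    by (simp add: gumbel_cdf_pos gumbel_cdf_less_1)
  finally show ?thesis .
qed

lemma choice_prob_pair_second_tendsto_1: "((\<lambda>v. choice_prob [a, v] 2) \<longlongrightarrow> 1) at_top"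
proof (rule tendsto_sandwich)
  define l where "l v = gumbel_cdf (v / 2) * gumbel_cdf (v / 2 - a) * (1 - gumbel_cdf (- (v / 2)))" for v
  have "l v \<le> choice_prob [a, v] 2" for v
    using choice_prob_pair_ge_box[of
        "\<lambda>i. if i = 0 then {..v / 2} else if i = 1 then {..v / 2 - a} else {- (v / 2)<..}" 2 a v]
    by (auto simp: l_def atMost_2 util_def measure_gumbel_atMost measure_gumbel_greaterThan)
  then show "\<forall>\<^sub>F v in at_top. l v \<le> choice_prob [a, v] 2"
    by simp
  have "filterlim (\<lambda>v::real. v / 2) at_top at_top" "filterlim (\<lambda>v::real. v / 2 - a) at_top at_top"
    "filterlim (\<lambda>v::real. - (v / 2)) at_bot at_top"
    by real_asymp+
  then show "(l \<longlongrightarrow> 1) at_top"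
    unfolding l_def[abs_def]
    using tendsto_mult[OF tendsto_mult[OF filterlim_compose[OF gumbel_cdf_at_top]
          filterlim_compose[OF gumbel_cdf_at_top]]
        tendsto_diff[OF tendsto_const filterlim_compose[OF gumbel_cdf_at_bot]]]
    by simp
qed (auto simp: choice_prob_le_1)

section \<open>The exploration dynamics of PEAR\<close>

lemma rho_bounds: "0 < rho1 VP p" "rho1 VP p < 1" "0 < rho2 VP p" "rho2 VP p < 1"
  by (auto simp: rho1_def rho2_def add_pos_pos)

definition likelihood_ratio :: "real \<Rightarrow> real \<Rightarrow> nat \<Rightarrow> nat \<Rightarrow> real" where
  "likelihood_ratio VP p S F =
     (rho2 VP p ^ S * (1 - rho2 VP p) ^ F) / (rho1 VP p ^ S * (1 - rho1 VP p) ^ F)"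

lemma post_ge_iff:
  assumes p: "0 < p" "p < 1"
  shows "p \<le> post VP p S F \<longleftrightarrow> likelihood_ratio VP p S F \<le> 1"
proof -
  define R where "R = likelihood_ratio VP p S F"
  have "0 < R"
    using rho_bounds[of VP p] by (simp add: R_def likelihood_ratio_def)
  then have "0 < 1 + (1 - p) / p * R"
    using p by (simp add: add_pos_pos)
  then have "p \<le> post VP p S F \<longleftrightarrow> p * (1 + (1 - p) / p * R) \<le> 1"
    by (simp add: post_def R_def likelihood_ratio_def field_simps)
  also have "p * (1 + (1 - p) / p * R) = p + (1 - p) * R"
    using p by (simp add: field_simps)
  also have "p + (1 - p) * R \<le> 1 \<longleftrightarrow> (1 - p) * R \<le> (1 - p) * 1"
    by (simp only: mult_1_right) linarith
  also have "\<dots> \<longleftrightarrow> R \<le> 1"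
    using p by (intro mult_le_cancel_left_pos) simp
  finally show ?thesis
    by (simp add: R_def)
qed

lemma post_ge_if_no_failure:
  assumes "0 < p" "p < 1" "rho2 VP p \<le> rho1 VP p"
  shows "p \<le> post VP p S 0"
  using assms rho_bounds[of VP p]
  by (simp add: post_ge_iff likelihood_ratio_def divide_le_eq_1 power_mono)

text \<open>Once 1 - \<rho>1 is small enough, a single failure outweighs up to T successes.\<close>

lemma post_less_if_failure:
  assumes p: "0 < p" "p < 1" and le: "rho2 VP p \<le> rho1 VP p" and F: "1 \<le> F" and S: "S \<le> T"
    and small: "1 - rho1 VP p < rho2 VP p ^ T * (1 - rho2 VP p)"
  shows "post VP p S F < p"
proof -
  define r1 r2 where "r1 = rho1 VP p" and "r2 = rho2 VP p"
  have r: "0 < r1" "r1 < 1" "0 < r2" "r2 < 1" "r2 \<le> r1"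
    using rho_bounds[of VP p] le by (simp_all add: r1_def r2_def)
  have "r2 ^ T \<le> r2 ^ S"
    using r S by (intro power_decreasing) auto
  also have "\<dots> \<le> r2 ^ S / r1 ^ S"
    using r by (simp add: le_divide_eq mult_left_le power_le_one)
  finally have successes: "r2 ^ T \<le> (r2 / r1) ^ S"
    by (simp add: power_divide)
  have "1 \<le> (1 - r2) / (1 - r1)"
    using r by simp
  then have failures: "(1 - r2) / (1 - r1) \<le> ((1 - r2) / (1 - r1)) ^ F"
    using F power_increasing[of 1 F "(1 - r2) / (1 - r1)"] by simp
  have "1 < r2 ^ T * ((1 - r2) / (1 - r1))"
    using small r by (simp add: r1_def r2_def field_simps)
  also have "\<dots> \<le> (r2 / r1) ^ S * ((1 - r2) / (1 - r1)) ^ F"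
    using successes failures r by (intro mult_mono) auto
  also have "\<dots> = likelihood_ratio VP p S F"
    by (simp add: likelihood_ratio_def r1_def r2_def power_divide)
  finally show ?thesis
    using post_ge_iff[OF p, of VP S F] by simp
qed

lemma finite_set_pmf_pear_step: "finite (set_pmf (pear_step VP p v x))"
  by (cases x) (auto simp: pear_step_def)

lemma finite_set_pmf_pear_state: "finite (set_pmf (pear_state VP p v t))"
  by (induction t) (auto intro!: finite_set_pmf_pear_step)

lemma pear_state_support:
  assumes "0 < p"
  shows "(S, F, q) \<in> set_pmf (pear_state VP p v t) \<Longrightarrow> q = post VP p S F \<and> S + F \<le> t"
proof (induction t arbitrary: S F q)
  case 0
  then show ?case
    using assms by (simp add: post_def field_simps)
next
  case (Suc t)
  then obtain S' F' q' where "(S', F', q') \<in> set_pmf (pear_state VP p v t)"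
    and "(S, F, q) \<in> set_pmf (pear_step VP p v (S', F', q'))"
    by auto
  with Suc.IH show ?case
    by (fastforce simp: pear_step_def split: if_splits)
qed

lemma Collect_id_True: "{b. b} = {True}"
  by auto

lemma prob_finite_pmf:
  "finite (set_pmf M) \<Longrightarrow> measure_pmf.prob M A = (\<Sum>x\<in>set_pmf M. pmf M x * indicator A x)"
  using integral_measure_pmf_real[of "set_pmf M" M "indicator A :: _ \<Rightarrow> real"]
  by (simp add: mult.commute)

lemma prob_bind_pmf_finite:
  assumes "finite (set_pmf M)" "\<And>x. finite (set_pmf (f x))"
  shows "measure_pmf.prob (bind_pmf M f) A = (\<Sum>x\<in>set_pmf M. pmf M x * measure_pmf.prob (f x) A)"
  using pmf_expectation_bind[of "set_pmf M" f M "indicator A :: _ \<Rightarrow> real"] assms by simp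

text \<open>While no failure has occurred the posterior stays above p, so PEAR keeps exploring
  and survives each step with the probability that the niche item is chosen.\<close>

lemma prob_no_failure:
  assumes p: "0 < p" "p < 1" and le: "rho2 VP p \<le> rho1 VP p"
  shows "measure_pmf.prob (pear_state VP p v t) {(S, F, q). F = 0} = choice_prob [VP, v] 2 ^ t"
proof (induction t)
  case 0
  then show ?case
    by simp
next
  case (Suc t)
  let ?c = "choice_prob [VP, v] 2" and ?A = "{(S, F, q). F = 0} :: (nat \<times> nat \<times> real) set"
  have step: "measure_pmf.prob (pear_step VP p v x) ?A = ?c * indicator ?A x"
    if "x \<in> set_pmf (pear_state VP p v t)" for x
  proof -
    obtain S F q where x: "x = (S, F, q)"
      by (cases x) auto
    then have q: "q = post VP p S F"
      using pear_state_support[OF p(1)] that by blast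
    show ?thesis
    proof (cases "F = 0")
      case True
      then have "p \<le> q"
        using post_ge_if_no_failure[OF p le] q by simp
      then show ?thesis
        using True choice_prob_nonneg[of "[VP, v]" 2] choice_prob_le_1[of "[VP, v]" 2]
        by (simp add: x pear_step_def vimage_def measure_pmf_single Collect_id_True)
    next
      case False
      then show ?thesis
        by (simp add: x pear_step_def vimage_def)
    qed
  qed
  have "measure_pmf.prob (pear_state VP p v (Suc t)) ?A =
        (\<Sum>x\<in>set_pmf (pear_state VP p v t). pmf (pear_state VP p v t) x * (?c * indicator ?A x))"
    by (simp add: prob_bind_pmf_finite finite_set_pmf_pear_state finite_set_pmf_pear_step step)
  also have "\<dots> = ?c * (\<Sum>x\<in>set_pmf (pear_state VP p v t). pmf (pear_state VP p v t) x * indicator ?A x)"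
    unfolding sum_distrib_left by (rule sum.cong) (simp_all add: mult_ac)
  also have "\<dots> = ?c * measure_pmf.prob (pear_state VP p v t) ?A"
    by (simp only: prob_finite_pmf[OF finite_set_pmf_pear_state])
  finally show ?case
    using Suc.IH by simp
qed

definition exploration_prob :: "real \<Rightarrow> real \<Rightarrow> real \<Rightarrow> nat \<Rightarrow> real" where
  "exploration_prob VP p v t = measure_pmf.prob (pear_state VP p v t) {(S, F, q). p \<le> q}"

lemma exploration_prob_ge:
  assumes p: "0 < p" "p < 1" and le: "rho2 VP p \<le> rho1 VP p"
  shows "choice_prob [VP, v] 2 ^ t \<le> exploration_prob VP p v t"
proof -
  let ?M = "pear_state VP p v t"
  have "{(S, F, q). F = 0} \<inter> set_pmf ?M \<subseteq> {(S, F, q). p \<le> q}"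
    using pear_state_support[OF p(1)] post_ge_if_no_failure[OF p le] by fastforce
  then have "measure_pmf.prob ?M ({(S, F, q). F = 0} \<inter> set_pmf ?M) \<le> exploration_prob VP p v t"
    unfolding exploration_prob_def by (rule measure_pmf.finite_measure_mono) simp
  then show ?thesis
    by (simp add: measure_Int_set_pmf prob_no_failure[OF p le])
qed

text \<open>For small p, up to time T PEAR explores exactly until the first failure.\<close>

lemma exploration_prob_eq:
  assumes p: "0 < p" "p < 1" and le: "rho2 VP p \<le> rho1 VP p"
    and small: "1 - rho1 VP p < rho2 VP p ^ T * (1 - rho2 VP p)" and "t \<le> T"
  shows "exploration_prob VP p v t = choice_prob [VP, v] 2 ^ t"
proof -
  let ?M = "pear_state VP p v t"
  have "{(S, F, q). p \<le> q} \<inter> set_pmf ?M = {(S, F, q). F = 0} \<inter> set_pmf ?M"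
  proof safe
    fix S F q
    assume "(S, F, q) \<in> set_pmf ?M" "p \<le> q"
    then show "F = 0"
      using pear_state_support[OF p(1)] post_less_if_failure[OF p le _ _ small, of F S] \<open>t \<le> T\<close>
      by fastforce
  qed (use pear_state_support[OF p(1)] post_ge_if_no_failure[OF p le] in fastforce)
  then have "exploration_prob VP p v t = measure_pmf.prob ?M {(S, F, q). F = 0}"
    unfolding exploration_prob_def by (metis measure_Int_set_pmf)
  then show ?thesis
    by (simp add: prob_no_failure[OF p le])
qed

lemma expectation_pear_offer:
  "measure_pmf.expectation (pear_state VP p v t) (\<lambda>(S, F, q). h (pear_offer VP p v q)) =
   exploration_prob VP p v t * h [VP, v] + (1 - exploration_prob VP p v t) * h [VP, VP]"
proof -
  let ?M = "pear_state VP p v t" and ?E = "{(S, F, q). p \<le> q} :: (nat \<times> nat \<times> real) set"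
  have "(\<lambda>(S, F, q). h (pear_offer VP p v q)) =
      (\<lambda>x. indicator ?E x * (h [VP, v] - h [VP, VP]) + h [VP, VP])"
    by (auto simp: pear_offer_def fun_eq_iff)
  then have "measure_pmf.expectation ?M (\<lambda>(S, F, q). h (pear_offer VP p v q)) =
      (\<Sum>x\<in>set_pmf ?M. pmf ?M x * (indicator ?E x * (h [VP, v] - h [VP, VP]) + h [VP, VP]))"
    by (simp add: integral_measure_pmf_real[OF finite_set_pmf_pear_state] mult.commute)
  also have "\<dots> = (\<Sum>x\<in>set_pmf ?M. pmf ?M x * indicator ?E x) * (h [VP, v] - h [VP, VP]) +
      (\<Sum>x\<in>set_pmf ?M. pmf ?M x) * h [VP, VP]"
    by (simp add: distrib_left sum.distrib sum_distrib_right mult.assoc)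
  finally show ?thesis
    by (simp add: exploration_prob_def prob_finite_pmf finite_set_pmf_pear_state sum_pmf_eq_1 algebra_simps)
qed

section \<open>Discounted values as the prior probability of a high niche value vanishes\<close>

lemma abs_convex_combination_le:
  fixes x a b :: real
  assumes "0 \<le> x" "x \<le> 1"
  shows "\<bar>x * a + (1 - x) * b\<bar> \<le> \<bar>a\<bar> + \<bar>b\<bar>"
proof -
  have "\<bar>x * a + (1 - x) * b\<bar> \<le> x * \<bar>a\<bar> + (1 - x) * \<bar>b\<bar>"
    using assms by (intro order_trans[OF abs_triangle_ineq]) (simp add: abs_mult)
  also have "\<dots> \<le> \<bar>a\<bar> + \<bar>b\<bar>"
    using assms mult_right_mono[of x 1 "\<bar>a\<bar>"] mult_right_mono[of "1 - x" 1 "\<bar>b\<bar>"] by simp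
  finally show ?thesis .
qed

lemma summable_discounted_mixture:
  fixes \<delta> a b :: real
  assumes "0 \<le> \<delta>" "\<delta> < 1" and "\<And>t. 0 \<le> x t" "\<And>t. x t \<le> 1"
  shows "summable (\<lambda>t. \<delta> ^ t * (x t * a + (1 - x t) * b))"
proof (rule summable_comparison_test)
  show "summable (\<lambda>t. \<delta> ^ t * (\<bar>a\<bar> + \<bar>b\<bar>))"
    using assms by (intro summable_mult2 summable_geometric) simp
  show "\<exists>N. \<forall>t\<ge>N. norm (\<delta> ^ t * (x t * a + (1 - x t) * b)) \<le> \<delta> ^ t * (\<bar>a\<bar> + \<bar>b\<bar>)"
    using assms abs_convex_combination_le by (auto simp: abs_mult intro!: mult_left_mono)
qed

lemma discounted_mixture_tendsto:
  fixes \<delta> :: real and x :: "nat \<Rightarrow> 'a \<Rightarrow> real"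
  assumes \<delta>: "0 \<le> \<delta>" "\<delta> < 1" and F: "F \<noteq> bot"
    and x: "\<And>t p. 0 \<le> x t p" "\<And>t p. x t p \<le> 1" "\<And>t. (x t \<longlongrightarrow> y t) F"
    and a: "(a \<longlongrightarrow> \<alpha>) F" and b: "(b \<longlongrightarrow> \<beta>) F"
  shows "((\<lambda>p. \<Sum>t. \<delta> ^ t * (x t p * a p + (1 - x t p) * b p)) \<longlongrightarrow>
          (\<Sum>t. \<delta> ^ t * (y t * \<alpha> + (1 - y t) * \<beta>))) F"
proof (rule tannerys_theorem[THEN conjunct2, THEN conjunct2])
  show "((\<lambda>p. \<delta> ^ t * (x t p * a p + (1 - x t p) * b p)) \<longlongrightarrow> \<delta> ^ t * (y t * \<alpha> + (1 - y t) * \<beta>)) F" for t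
    by (intro tendsto_intros x a b)
  have "\<forall>\<^sub>F p in F. \<bar>a p\<bar> < \<bar>\<alpha>\<bar> + 1" "\<forall>\<^sub>F p in F. \<bar>b p\<bar> < \<bar>\<beta>\<bar> + 1"
    using order_tendstoD(2)[OF tendsto_rabs[OF a]] order_tendstoD(2)[OF tendsto_rabs[OF b]]
    by simp_all
  then have "\<forall>\<^sub>F p in F. \<forall>t.
      norm (\<delta> ^ t * (x t p * a p + (1 - x t p) * b p)) \<le> \<delta> ^ t * (\<bar>\<alpha>\<bar> + \<bar>\<beta>\<bar> + 2)"
  proof eventually_elim
    case (elim p)
    have "\<bar>x t p * a p + (1 - x t p) * b p\<bar> \<le> \<bar>\<alpha>\<bar> + \<bar>\<beta>\<bar> + 2" for t
      using abs_convex_combination_le[OF x(1,2), of t p "a p" "b p"] elim by simp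
    then show ?case
      using \<delta> by (simp add: abs_mult mult_left_mono)
  qed
  from eventually_prodI[OF always_eventually[of "\<lambda>_::nat. True"] this]
  show "\<forall>\<^sub>F (t, p) in at_top \<times>\<^sub>F F.
      norm (\<delta> ^ t * (x t p * a p + (1 - x t p) * b p)) \<le> \<delta> ^ t * (\<bar>\<alpha>\<bar> + \<bar>\<beta>\<bar> + 2)"
    by (rule eventually_mono) auto
  show "summable (\<lambda>t. \<delta> ^ t * (\<bar>\<alpha>\<bar> + \<bar>\<beta>\<bar> + 2))"
    using \<delta> by (intro summable_mult2 summable_geometric) simp
qed (rule F)

lemma discounted_geometric_mixture_sums:
  fixes \<delta> a c d :: real
  assumes "0 \<le> \<delta>" "\<delta> < 1" "0 \<le> a" "a < 1"
  shows "(\<lambda>t. \<delta> ^ t * (a ^ t * c + (1 - a ^ t) * d)) sums ((c - d) / (1 - \<delta> * a) + d / (1 - \<delta>))"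
proof -
  have "\<bar>\<delta> * a\<bar> < 1"
    using assms mult_left_le[of a \<delta>] by (simp add: abs_mult)
  then have "(\<lambda>t. (\<delta> * a) ^ t * (c - d) + \<delta> ^ t * d) sums (1 / (1 - \<delta> * a) * (c - d) + 1 / (1 - \<delta>) * d)"
    using assms by (intro sums_add sums_mult2 geometric_sums) simp_all
  then show ?thesis
    by (simp add: power_mult_distrib algebra_simps)
qed

definition discounted_pear :: "(real list \<Rightarrow> real) \<Rightarrow> real \<Rightarrow> real \<Rightarrow> real \<Rightarrow> real \<Rightarrow> real" where
  "discounted_pear h VP \<delta> p v = (\<Sum>t. \<delta> ^ t *
     measure_pmf.expectation (pear_state VP p v t) (\<lambda>(S, F, q). h (pear_offer VP p v q)))"

lemma discounted_pear_eq: "discounted_pear h VP \<delta> p v =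
  (\<Sum>t. \<delta> ^ t * (exploration_prob VP p v t * h [VP, v] + (1 - exploration_prob VP p v t) * h [VP, VP]))"
  by (simp add: discounted_pear_def expectation_pear_offer)

lemma exploration_prob_nonneg: "0 \<le> exploration_prob VP p v t"
  and exploration_prob_le_1: "exploration_prob VP p v t \<le> 1"
  by (simp_all add: exploration_prob_def)

lemma rho1_tendsto_1: "(rho1 VP \<longlongrightarrow> 1) (at_right 0)"
  unfolding rho1_def[abs_def] by real_asymp

lemma eventually_one_failure_decisive:
  "\<forall>\<^sub>F p in at_right 0. 0 < p \<and> p < 1 \<and> rho2 VP p \<le> rho1 VP p \<and>
     1 - rho1 VP p < rho2 VP p ^ T * (1 - rho2 VP p)"
proof -
  define r where "r = rho2 VP 0"
  have rho2: "rho2 VP p = r" for p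
    by (simp add: r_def rho2_def)
  have r: "0 < r" "r < 1"
    using rho_bounds(3,4)[of VP 0] by (simp_all add: r_def)
  have rho1_gap: "((\<lambda>p. 1 - rho1 VP p) \<longlongrightarrow> 0) (at_right 0)"
    using tendsto_diff[OF tendsto_const rho1_tendsto_1, of 1] by simp
  have "\<forall>\<^sub>F p in at_right 0. p \<in> {0<..<1::real}"
    by (rule eventually_at_right_real) simp
  moreover have "\<forall>\<^sub>F p in at_right 0. r < rho1 VP p"
    using order_tendstoD(1)[OF rho1_tendsto_1 r(2)] .
  moreover have "\<forall>\<^sub>F p in at_right 0. 1 - rho1 VP p < r ^ T * (1 - r)"
    using rho1_gap by (rule order_tendstoD(2)) (use r in \<open>simp add: zero_less_mult_iff\<close>)
  ultimately show ?thesis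
    by eventually_elim (auto simp: rho2)
qed

lemma exploration_prob_tendsto_fixed:
  "((\<lambda>p. exploration_prob VP p v t) \<longlongrightarrow> choice_prob [VP, v] 2 ^ t) (at_right 0)"
proof (rule tendsto_eventually)
  show "\<forall>\<^sub>F p in at_right 0. exploration_prob VP p v t = choice_prob [VP, v] 2 ^ t"
    using eventually_one_failure_decisive[of VP t]
    by eventually_elim (auto intro: exploration_prob_eq[where T = t])
qed

lemma exploration_prob_tendsto_high:
  "((\<lambda>p. exploration_prob VP p ((1 - p) / p) t) \<longlongrightarrow> 1) (at_right 0)"
proof (rule tendsto_sandwich[where h = "\<lambda>_. 1"])
  have "filterlim (\<lambda>p::real. (1 - p) / p) at_top (at_right 0)"
    by real_asymp
  then have "((\<lambda>p. choice_prob [VP, (1 - p) / p] 2 ^ t) \<longlongrightarrow> 1 ^ t) (at_right 0)"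
    by (intro tendsto_power filterlim_compose[OF choice_prob_pair_second_tendsto_1])
  then show "((\<lambda>p. choice_prob [VP, (1 - p) / p] 2 ^ t) \<longlongrightarrow> 1) (at_right 0)"
    by simp
  show "\<forall>\<^sub>F p in at_right 0. choice_prob [VP, (1 - p) / p] 2 ^ t \<le> exploration_prob VP p ((1 - p) / p) t"
    using eventually_one_failure_decisive[of VP 0]
    by eventually_elim (auto intro: exploration_prob_ge)
qed (simp_all add: exploration_prob_le_1)

text \<open>For a niche value v independent of p, PEAR explores at time t with probability a^t in the
  limit, a being the probability that the niche item is chosen.\<close>

lemma discounted_pear_tendsto_fixed:
  assumes "0 < \<delta>" "\<delta> < 1"
  shows "((\<lambda>p. discounted_pear h VP \<delta> p v) \<longlongrightarrow>
    (h [VP, v] - h [VP, VP]) / (1 - \<delta> * choice_prob [VP, v] 2) + h [VP, VP] / (1 - \<delta>)) (at_right 0)"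
proof -
  let ?a = "choice_prob [VP, v] 2"
  have "((\<lambda>p. discounted_pear h VP \<delta> p v) \<longlongrightarrow>
      (\<Sum>t. \<delta> ^ t * (?a ^ t * h [VP, v] + (1 - ?a ^ t) * h [VP, VP]))) (at_right 0)"
    unfolding discounted_pear_eq using assms
    by (intro discounted_mixture_tendsto exploration_prob_tendsto_fixed tendsto_const
        exploration_prob_nonneg exploration_prob_le_1) simp_all
  moreover have "(\<Sum>t. \<delta> ^ t * (?a ^ t * h [VP, v] + (1 - ?a ^ t) * h [VP, VP])) =
      (h [VP, v] - h [VP, VP]) / (1 - \<delta> * ?a) + h [VP, VP] / (1 - \<delta>)"
    using assms choice_prob_nonneg choice_prob_pair_second_less_1
    by (intro sums_unique[symmetric] discounted_geometric_mixture_sums) simp_all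
  ultimately show ?thesis
    by simp
qed

text \<open>For the niche value (1 - p) / p, PEAR explores forever in the limit, so only the scaled
  value of the niche menu survives.\<close>

lemma scaled_discounted_pear_tendsto_high:
  assumes "0 < \<delta>" "\<delta> < 1" and h: "((\<lambda>p. p * h [VP, (1 - p) / p]) \<longlongrightarrow> c) (at_right 0)"
  shows "((\<lambda>p. p * discounted_pear h VP \<delta> p ((1 - p) / p)) \<longlongrightarrow> c / (1 - \<delta>)) (at_right 0)"
proof -
  let ?x = "\<lambda>t p. exploration_prob VP p ((1 - p) / p) t"
  have "p * discounted_pear h VP \<delta> p ((1 - p) / p) =
      (\<Sum>t. \<delta> ^ t * (?x t p * (p * h [VP, (1 - p) / p]) + (1 - ?x t p) * (p * h [VP, VP])))" for p
  proof -
    have "summable (\<lambda>t. \<delta> ^ t * (?x t p * h [VP, (1 - p) / p] + (1 - ?x t p) * h [VP, VP]))"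
      using assms
      by (intro summable_discounted_mixture exploration_prob_nonneg exploration_prob_le_1) simp_all
    then show ?thesis
      unfolding discounted_pear_eq by (subst suminf_mult[symmetric]) (simp_all add: algebra_simps)
  qed
  moreover have "((\<lambda>p. \<Sum>t. \<delta> ^ t * (?x t p * (p * h [VP, (1 - p) / p]) + (1 - ?x t p) * (p * h [VP, VP])))
      \<longlongrightarrow> (\<Sum>t. \<delta> ^ t * (1 * c + (1 - 1) * (0 * h [VP, VP])))) (at_right 0)"
    using assms
    by (intro discounted_mixture_tendsto exploration_prob_tendsto_high h tendsto_intros
        exploration_prob_nonneg exploration_prob_le_1) simp_all
  moreover have "(\<Sum>t. \<delta> ^ t * (1 * c + (1 - 1) * (0 * h [VP, VP]))) = c / (1 - \<delta>)"
    using assms by (simp add: suminf_mult2[symmetric] suminf_geometric)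
  ultimately show ?thesis
    by simp
qed

section \<open>Engagement and utility ratios\<close>

lemma Eng_APP_eq: "0 < \<delta> \<Longrightarrow> \<delta> < 1 \<Longrightarrow> Eng_APP VP \<delta> = eng_step [VP, VP] / (1 - \<delta>)"
  by (simp add: Eng_APP_def suminf_mult2[symmetric] suminf_geometric divide_inverse)

lemma Util_APP_eq: "0 < \<delta> \<Longrightarrow> \<delta> < 1 \<Longrightarrow> Util_APP VP \<delta> = util_step [VP, VP] / (1 - \<delta>)"
  by (simp add: Util_APP_def suminf_mult2[symmetric] suminf_geometric divide_inverse)

lemma Eng_PEAR_tendsto:
  assumes "0 < \<delta>" "\<delta> < 1"
  shows "(Eng_PEAR VP \<delta> \<longlongrightarrow> 0 / (1 - \<delta>) +
    ((eng_step [VP, -1] - eng_step [VP, VP]) / (1 - \<delta> * choice_prob [VP, -1] 2) +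
      eng_step [VP, VP] / (1 - \<delta>))) (at_right 0)"
proof -
  have "((\<lambda>p. p * eng_step [VP, (1 - p) / p]) \<longlongrightarrow> 0) (at_right 0)"
  proof (rule tendsto_0_le[where K = 2])
    show "((\<lambda>p. p) \<longlongrightarrow> 0) (at_right (0::real))"
      by (rule tendsto_ident_at)
    show "\<forall>\<^sub>F p in at_right 0. norm (p * eng_step [VP, (1 - p) / p]) \<le> norm p * 2"
      using eng_step_pair_bounds by (simp add: abs_mult mult_left_mono)
  qed
  then have "((\<lambda>p. p * discounted_pear eng_step VP \<delta> p ((1 - p) / p) +
      (1 - p) * discounted_pear eng_step VP \<delta> p (-1)) \<longlongrightarrow> 0 / (1 - \<delta>) +
    (1 - 0) * ((eng_step [VP, -1] - eng_step [VP, VP]) / (1 - \<delta> * choice_prob [VP, -1] 2) +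
      eng_step [VP, VP] / (1 - \<delta>))) (at_right 0)"
    by (intro tendsto_intros scaled_discounted_pear_tendsto_high discounted_pear_tendsto_fixed assms)
  then show ?thesis
    by (simp add: Eng_PEAR_def[abs_def] eng_pear_given_def discounted_pear_def)
qed

lemma Util_PEAR_tendsto:
  assumes "0 < \<delta>" "\<delta> < 1"
  shows "(Util_PEAR VP \<delta> \<longlongrightarrow> 1 / (1 - \<delta>) +
    ((util_step [VP, -1] - util_step [VP, VP]) / (1 - \<delta> * choice_prob [VP, -1] 2) +
      util_step [VP, VP] / (1 - \<delta>))) (at_right 0)"
proof -
  have "((\<lambda>p. p * util_step [VP, (1 - p) / p]) \<longlongrightarrow> 1) (at_right 0)"
    unfolding util_step_pair by real_asymp
  then have "((\<lambda>p. p * discounted_pear util_step VP \<delta> p ((1 - p) / p) +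
      (1 - p) * discounted_pear util_step VP \<delta> p (-1)) \<longlongrightarrow> 1 / (1 - \<delta>) +
    (1 - 0) * ((util_step [VP, -1] - util_step [VP, VP]) / (1 - \<delta> * choice_prob [VP, -1] 2) +
      util_step [VP, VP] / (1 - \<delta>))) (at_right 0)"
    by (intro tendsto_intros scaled_discounted_pear_tendsto_high discounted_pear_tendsto_fixed assms)
  then show ?thesis
    by (simp add: Util_PEAR_def[abs_def] util_pear_given_def discounted_pear_def)
qed

lemma discounted_ratio_tendsto:
  fixes f :: "real \<Rightarrow> real \<Rightarrow> real" and g :: "real \<Rightarrow> real"
  assumes a: "0 \<le> a" "a < 1" and e: "e \<noteq> 0"
    and f: "\<And>\<delta>. 0 < \<delta> \<Longrightarrow> \<delta> < 1 \<Longrightarrow>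
      (f \<delta> \<longlongrightarrow> c / (1 - \<delta>) + ((b - e) / (1 - \<delta> * a) + e / (1 - \<delta>))) (at_right 0)"
    and g: "\<And>\<delta>. 0 < \<delta> \<Longrightarrow> \<delta> < 1 \<Longrightarrow> g \<delta> = e / (1 - \<delta>)"
  shows "\<exists>L. (\<forall>\<^sub>F \<delta> in at_left 1. ((\<lambda>p. f \<delta> p / g \<delta>) \<longlongrightarrow> L \<delta>) (at_right 0)) \<and>
    (L \<longlongrightarrow> c / e + 1) (at_left 1)"
proof (intro exI conjI)
  define L where "L \<delta> = c / e + (1 - \<delta>) * (b - e) / ((1 - \<delta> * a) * e) + 1" for \<delta>
  have "\<forall>\<^sub>F \<delta> in at_left 1. \<delta> \<in> {0<..<1::real}"
    by (rule eventually_at_left_real) simp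
  then show "\<forall>\<^sub>F \<delta> in at_left 1. ((\<lambda>p. f \<delta> p / g \<delta>) \<longlongrightarrow> L \<delta>) (at_right 0)"
  proof eventually_elim
    case (elim \<delta>)
    then have \<delta>: "0 < \<delta>" "\<delta> < 1"
      by auto
    have "\<delta> * a \<le> \<delta>"
      using a \<delta> by (intro mult_left_le) auto
    then have "0 < 1 - \<delta>" "0 < 1 - \<delta> * a"
      using \<delta> by linarith+
    moreover have "(c / u + ((b - e) / w + e / u)) / (e / u) = c / e + u * (b - e) / (w * e) + 1"
      if "u \<noteq> 0" "w \<noteq> 0" for u w
      using that e by (simp add: field_simps)
    ultimately have "L \<delta> = (c / (1 - \<delta>) + ((b - e) / (1 - \<delta> * a) + e / (1 - \<delta>))) / (e / (1 - \<delta>))"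
      by (simp add: L_def)
    then show ?case
      using \<delta> e by (auto simp: g intro!: tendsto_divide f)
  qed
  have "(L \<longlongrightarrow> c / e + (1 - 1) * (b - e) / ((1 - 1 * a) * e) + 1) (at_left 1)"
    unfolding L_def[abs_def] using a e by (intro tendsto_intros) auto
  then show "(L \<longlongrightarrow> c / e + 1) (at_left 1)"
    by simp
qed

theorem corollary2:
  fixes VP :: real
  assumes "VP \<ge> 0"
  shows "(\<exists>L. (\<forall>\<^sub>F \<delta> in at_left 1.
              ((\<lambda>p. Eng_PEAR VP \<delta> p / Eng_APP VP \<delta>) \<longlongrightarrow> L \<delta>) (at_right 0))
            \<and> (L \<longlongrightarrow> 1) (at_left 1))
       \<and> (\<exists>L. (\<forall>\<^sub>F \<delta> in at_left 1.
              ((\<lambda>p. Util_PEAR VP \<delta> p / Util_APP VP \<delta>) \<longlongrightarrow> L \<delta>) (at_right 0))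
            \<and> (L \<longlongrightarrow> 1 + 1 / ln (1 + 2 * exp VP)) (at_left 1))"
proof -
  let ?a = "choice_prob [VP, -1] 2"
  have a: "0 \<le> ?a" "?a < 1"
    by (rule choice_prob_nonneg, rule choice_prob_pair_second_less_1)
  have u: "util_step [VP, VP] = ln (1 + 2 * exp VP)"
    unfolding util_step_pair mult_2 add.assoc ..
  have "\<exists>L. (\<forall>\<^sub>F \<delta> in at_left 1. ((\<lambda>p. Eng_PEAR VP \<delta> p / Eng_APP VP \<delta>) \<longlongrightarrow> L \<delta>) (at_right 0)) \<and>
      (L \<longlongrightarrow> 0 / eng_step [VP, VP] + 1) (at_left 1)"
    using eng_step_pair_pos[of VP]
    by (intro discounted_ratio_tendsto[OF a _ Eng_PEAR_tendsto Eng_APP_eq]) auto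
  moreover have "\<exists>L. (\<forall>\<^sub>F \<delta> in at_left 1. ((\<lambda>p. Util_PEAR VP \<delta> p / Util_APP VP \<delta>) \<longlongrightarrow> L \<delta>) (at_right 0)) \<and>
      (L \<longlongrightarrow> 1 / util_step [VP, VP] + 1) (at_left 1)"
    using u
    by (intro discounted_ratio_tendsto[OF a _ Util_PEAR_tendsto Util_APP_eq]) (auto simp: add_pos_pos)
  ultimately show ?thesis
    by (simp add: u add.commute)
qed

end
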